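(* Let $\mathcal{S}(\vec{x},\vec{a})$ be a specification over $\vec{a}$, where $\vec{x}$ and $\vec{a}$ are disjoint lists of Boolean variables. Let $\alpha$ be any assignment of the variables $\vec{x}$. Then $\alpha$ can be extended to an assignment $\beta$ of $\vec{x},\vec{a}$ such that (1) $\beta$ satisfies $\mathcal{S}$, and (2) $\alpha(x)=\beta(x)$ for every $x\in\vec{x}$.
   Context: A literal over a Boolean variable $x$ is $x$ or $\bar{x}=1-x$. A pseudo-Boolean (PB) constraint is $C\doteq\sum_i a_i\ell_i\ge A$ with integer $a_i,A$ and literals $\ell_i$; its negation is $\neg C\doteq\sum_i a_i\bar{\ell}_i\ge \sum_i a_i-A+1$. A formula is a finite set (conjunction) of PB constraints. A substitution (witness) $\omega$ maps variables to $0$, $1$ or literals, extended by $\omega(\bar x)=\overline{\omega(x)}$, $\omega(0)=0$, $\omega(1)=1$; its support is $\mathrm{supp}(\omega)=\{x:\omega(x)\ne x\}$. $C{\upharpoonright}_\omega\doteq\sum_i a_i\omega(\ell_i)\ge A$, and $F{\upharpoonright}_\omega=\{C{\upharpoonright}_\omega : C\in F\}$. For formulas $F,G$, $F\vdash G$ means every constraint of $G$ can be derived from $F$ in the cutting planes proof system (a sound system, so every assignment satisfying $F$ satisfies $G$). A formula $\mathcal{S}(\vec x,\vec a)=\{C_1,\dots,C_n\}$ is a specification over $\vec a$ if there are substitutions $\omega_1,\dots,\omega_n$ with $\mathrm{supp}(\omega_i)\subseteq\vec a$ for all $i$ such that for each $i\in\{1,\dots,n\}$: $\{C_1,\dots,C_{i-1}\}\cup\{\neg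 C_i\}\vdash\{C_1{\upharpoonright}_{\omega_i},\dots,C_i{\upharpoonright}_{\omega_i}\}$ (for $i=1$ the left-hand side is just $\{\neg C_1\}$). *)

theory Defs
  imports Main
begin

datatype 'v lit = Pos 'v | Neg 'v

fun lneg :: "'v lit \<Rightarrow> 'v lit" where
  "lneg (Pos x) = Neg x"
| "lneg (Neg x) = Pos x"

fun lit_var :: "'v lit \<Rightarrow> 'v" where
  "lit_var (Pos x) = x"
| "lit_var (Neg x) = x"

record 'v pbc =
  terms :: "(int \<times> 'v lit) list"
  degree :: int

fun lit_val :: "('v \<Rightarrow> bool) \<Rightarrow> 'v lit \<Rightarrow> bool" where
  "lit_val \<beta> (Pos x) = \<beta> x"
| "lit_val \<beta> (Neg x) = (\<not> \<beta> x)"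

definition sat :: "('v \<Rightarrow> bool) \<Rightarrow> 'v pbc \<Rightarrow> bool" where
  "sat \<beta> C \<longleftrightarrow>
     (\<Sum>(a, l) \<leftarrow> terms C. a * (if lit_val \<beta> l then 1 else 0)) \<ge> degree C"

definition pbc_vars :: "'v pbc \<Rightarrow> 'v set" where
  "pbc_vars C = lit_var ` snd ` set (terms C)"

definition pbc_neg :: "'v pbc \<Rightarrow> 'v pbc" where
  "pbc_neg C = \<lparr> terms = map (\<lambda>(a, l). (a, lneg l)) (terms C),
                 degree = (\<Sum>(a, l) \<leftarrow> terms C. a) - degree C + 1 \<rparr>"

datatype 'v sval = SConst bool | SLit "'v lit"

type_synonym 'v subst = "'v \<Rightarrow> 'v sval"

fun sval_neg :: "'v sval \<Rightarrow> 'v sval" where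
  "sval_neg (SConst b) = SConst (\<not> b)"
| "sval_neg (SLit l) = SLit (lneg l)"

fun subst_lit :: "'v subst \<Rightarrow> 'v lit \<Rightarrow> 'v sval" where
  "subst_lit \<omega> (Pos x) = \<omega> x"
| "subst_lit \<omega> (Neg x) = sval_neg (\<omega> x)"

definition supp :: "'v subst \<Rightarrow> 'v set" where
  "supp \<omega> = {x. \<omega> x \<noteq> SLit (Pos x)}"

definition restrict :: "'v pbc \<Rightarrow> 'v subst \<Rightarrow> 'v pbc" where
  "restrict C \<omega> =
     \<lparr> terms = concat (map (\<lambda>(a, l). case subst_lit \<omega> l of SLit l' \<Rightarrow> [(a, l')] | SConst _ \<Rightarrow> [])
                          (terms C)),
       degree = degree C -
         (\<Sum>(a, l) \<leftarrow> terms C. if subst_lit \<omega> l = SConst True then a else 0) \<rparr>"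

text \<open>Linear normal form over variables (using  not x = 1 - x):
  a pair (c, A) standing for  sum_x c(x) * x >= A.\<close>
type_synonym 'v linc = "('v \<Rightarrow> int) \<times> int"

definition lin :: "'v pbc \<Rightarrow> 'v linc" where
  "lin C = ((\<lambda>x. (\<Sum>(a, l) \<leftarrow> terms C.
                    if l = Pos x then a else if l = Neg x then - a else 0)),
            degree C - (\<Sum>(a, l) \<leftarrow> terms C. case l of Neg _ \<Rightarrow> a | Pos _ \<Rightarrow> 0))"

inductive cp_derivable :: "'v pbc set \<Rightarrow> 'v linc \<Rightarrow> bool" for F :: "'v pbc set" where
  cp_axiom: "C \<in> F \<Longrightarrow> cp_derivable F (lin C)"
| cp_lit_pos: "cp_derivable F ((\<lambda>y. if y = x then 1 else 0), 0)"
| cp_lit_neg: "cp_derivable F ((\<lambda>y. if y = x then -1 else 0), -1)"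
| cp_add: "cp_derivable F (c, A) \<Longrightarrow> cp_derivable F (d, B)
            \<Longrightarrow> cp_derivable F ((\<lambda>x. c x + d x), A + B)"
| cp_mult: "cp_derivable F (c, A) \<Longrightarrow> k > 0
            \<Longrightarrow> cp_derivable F ((\<lambda>x. k * c x), k * A)"
| cp_div: "cp_derivable F (c, A) \<Longrightarrow> d > 0 \<Longrightarrow> (\<forall>x. d dvd c x)
            \<Longrightarrow> cp_derivable F ((\<lambda>x. c x div d), - ((- A) div d))"

definition cp_derives :: "'v pbc set \<Rightarrow> 'v pbc set \<Rightarrow> bool" where
  "cp_derives F G \<longleftrightarrow> (\<forall>D \<in> G. cp_derivable F (lin D))"

text \<open>S = [C_1, ..., C_n] (0-indexed here) is a specification over the variable set As.\<close>
definition is_specification :: "'v pbc list \<Rightarrow> 'v set \<Rightarrow> bool" where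
  "is_specification S As \<longleftrightarrow>
     (\<exists>\<omega> :: nat \<Rightarrow> 'v subst.
        \<forall>i < length S. supp (\<omega> i) \<subseteq> As \<and>
          cp_derives (set (take i S) \<union> {pbc_neg (S ! i)})
                     ((\<lambda>C. restrict C (\<omega> i)) ` set (take (Suc i) S)))"

end

theory Submission imports Defs begin

text \<open>Extend \<open>\<alpha>\<close> constraint by constraint, maintaining an assignment that agrees with \<open>\<alpha>\<close>
  outside the auxiliary variables and satisfies \<open>C\<^sub>1, \<dots>, C\<^sub>i\<^sub>-\<^sub>1\<close>. If it falsifies \<open>C\<^sub>i\<close>, it
  satisfies \<open>\<not>C\<^sub>i\<close>, so by soundness of cutting planes it satisfies every \<open>C\<^sub>j\<restriction>\<omega>\<^sub>i\<close> with
  \<open>j \<le> i\<close>. Equivalently, its composition with \<open>\<omega>\<^sub>i\<close> satisfies \<open>C\<^sub>1, \<dots>, C\<^sub>i\<close>, and this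
  composition still agrees with \<open>\<alpha>\<close> outside the auxiliary variables, the only ones \<open>\<omega>\<^sub>i\<close> moves.\<close>

\<comment> \<open>Derived constraints have finitely many nonzero coefficients; without this clause the
  sum below would silently be \<open>0\<close> for infinite support.\<close>
definition lin_sat :: "('v \<Rightarrow> bool) \<Rightarrow> 'v linc \<Rightarrow> bool" where
  "lin_sat \<beta> p \<longleftrightarrow> finite {x. fst p x \<noteq> 0} \<and>
     snd p \<le> (\<Sum>x | fst p x \<noteq> 0. fst p x * of_bool (\<beta> x))"

lemma lin_sat_iff_sum_over:
  assumes "finite V" "{x. c x \<noteq> 0} \<subseteq> V"
  shows "lin_sat \<beta> (c, A) \<longleftrightarrow> A \<le> (\<Sum>x\<in>V. c x * of_bool (\<beta> x))"
proof -
  have "(\<Sum>x | c x \<noteq> 0. c x * of_bool (\<beta> x)) = (\<Sum>x\<in>V. c x * of_bool (\<beta> x))"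
    by (rule sum.mono_neutral_left) (use assms in auto)
  then show ?thesis
    using finite_subset[OF assms(2,1)] by (simp add: lin_sat_def)
qed

lemma sum_lin_coeff_single:
  fixes a :: int
  assumes "finite V" "lit_var l \<in> V"
  shows "(\<Sum>x\<in>V. (if l = Pos x then a else if l = Neg x then - a else 0) * of_bool (\<beta> x))
     = a * of_bool (lit_val \<beta> l) - (case l of Neg _ \<Rightarrow> a | Pos _ \<Rightarrow> 0)"
  by (cases l) (use assms in \<open>simp_all add: if_distrib[where f = "\<lambda>t. t * _"] cong: if_cong\<close>)

lemma sum_list_lit_val_eq_lin:
  fixes ts :: "(int \<times> 'v lit) list"
  assumes "finite V" "lit_var ` snd ` set ts \<subseteq> V"
  shows "(\<Sum>(a, l) \<leftarrow> ts. a * of_bool (lit_val \<beta> l)) =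
    (\<Sum>x\<in>V. (\<Sum>(a, l) \<leftarrow> ts. if l = Pos x then a else if l = Neg x then - a else 0) * of_bool (\<beta> x))
    + (\<Sum>(a, l) \<leftarrow> ts. case l of Neg _ \<Rightarrow> a | Pos _ \<Rightarrow> 0)"
  using assms(2)
proof (induction ts)
  case Nil
  then show ?case by simp
next
  case (Cons t ts)
  obtain a l where t: "t = (a, l)" by (cases t)
  with Cons.prems have "lit_var l \<in> V" by auto
  from sum_lin_coeff_single[OF assms(1) this] Cons show ?case
    by (simp add: t distrib_right sum.distrib)
qed

lemma lin_support_subset_pbc_vars: "{x. fst (lin C) x \<noteq> 0} \<subseteq> pbc_vars C"
proof (rule subsetI, rule ccontr)
  fix x assume "x \<in> {x. fst (lin C) x \<noteq> 0}" "x \<notin> pbc_vars C"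
  moreover from \<open>x \<notin> pbc_vars C\<close> have "\<forall>(a, l) \<in> set (terms C). l \<noteq> Pos x \<and> l \<noteq> Neg x"
    unfolding pbc_vars_def by force
  then have "fst (lin C) x = 0"
    unfolding lin_def fst_conv by (subst map_cong[OF refl, where g = "\<lambda>_. 0"]) auto
  ultimately show False by simp
qed

lemma sat_iff_lin_sat: "sat \<beta> C \<longleftrightarrow> lin_sat \<beta> (lin C)"
proof -
  have fin: "finite (pbc_vars C)"
    by (simp add: pbc_vars_def)
  have "(\<Sum>(a, l) \<leftarrow> terms C. a * of_bool (lit_val \<beta> l)) =
      (\<Sum>x\<in>pbc_vars C. fst (lin C) x * of_bool (\<beta> x))
      + (\<Sum>(a, l) \<leftarrow> terms C. case l of Neg _ \<Rightarrow> a | Pos _ \<Rightarrow> 0)"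
    unfolding lin_def fst_conv
    by (rule sum_list_lit_val_eq_lin[OF fin]) (simp add: pbc_vars_def)
  moreover have "snd (lin C) = degree C - (\<Sum>(a, l) \<leftarrow> terms C. case l of Neg _ \<Rightarrow> a | Pos _ \<Rightarrow> 0)"
    by (simp add: lin_def)
  ultimately show ?thesis
    using lin_sat_iff_sum_over[OF fin lin_support_subset_pbc_vars, of \<beta> "snd (lin C)", unfolded prod.collapse]
    by (simp add: sat_def of_bool_def, linarith)
qed

lemma ceiling_div_le_div:
  fixes A S d :: int
  assumes "A \<le> S" "d > 0" "d dvd S"
  shows "- ((- A) div d) \<le> S div d"
proof -
  have "(- S) div d \<le> (- A) div d"
    using assms by (simp add: zdiv_mono1)
  moreover have "(- S) div d = - (S div d)"
    using assms(3) by (rule dvd_neg_div)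
  ultimately show ?thesis by linarith
qed

lemma cp_derivable_sound:
  assumes "cp_derivable F p" "\<forall>C \<in> F. sat \<beta> C"
  shows "lin_sat \<beta> p"
  using assms(1)
proof (induction rule: cp_derivable.induct)
  case (cp_axiom C)
  with assms(2) show ?case by (simp add: sat_iff_lin_sat)
next
  case (cp_lit_pos x)
  then show ?case by (subst lin_sat_iff_sum_over[of "{x}"]) auto
next
  case (cp_lit_neg x)
  then show ?case by (subst lin_sat_iff_sum_over[of "{x}"]) auto
next
  case (cp_add c A d B)
  let ?V = "{x. c x \<noteq> 0} \<union> {x. d x \<noteq> 0}"
  have fin: "finite ?V"
    using cp_add.IH by (simp add: lin_sat_def)
  have "A \<le> (\<Sum>x\<in>?V. c x * of_bool (\<beta> x))" "B \<le> (\<Sum>x\<in>?V. d x * of_bool (\<beta> x))"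
    using cp_add.IH lin_sat_iff_sum_over[OF fin] by auto
  moreover have "{x. c x + d x \<noteq> 0} \<subseteq> ?V" by auto
  ultimately show ?case
    by (simp add: lin_sat_iff_sum_over[OF fin] distrib_right sum.distrib)
next
  case (cp_mult c A k)
  let ?V = "{x. c x \<noteq> 0}"
  have fin: "finite ?V"
    using cp_mult.IH by (simp add: lin_sat_def)
  have "k * A \<le> k * (\<Sum>x\<in>?V. c x * of_bool (\<beta> x))"
    using cp_mult lin_sat_iff_sum_over[OF fin] by simp
  moreover have "{x. k * c x \<noteq> 0} \<subseteq> ?V" by auto
  ultimately show ?case
    by (simp add: lin_sat_iff_sum_over[OF fin] sum_distrib_left mult.assoc)
next
  case (cp_div c A d)
  let ?V = "{x. c x \<noteq> 0}"
  let ?s = "\<Sum>x\<in>?V. c x * of_bool (\<beta> x)"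
  have fin: "finite ?V"
    using cp_div.IH by (simp add: lin_sat_def)
  have "?s = d * (\<Sum>x\<in>?V. c x div d * of_bool (\<beta> x))"
    unfolding sum_distrib_left mult.assoc[symmetric]
    using cp_div.hyps(3) by (simp add: dvd_mult_div_cancel)
  then have "(\<Sum>x\<in>?V. c x div d * of_bool (\<beta> x)) = ?s div d"
    using cp_div.hyps(2) by simp
  moreover have "- ((- A) div d) \<le> ?s div d"
    using cp_div lin_sat_iff_sum_over[OF fin]
    by (intro ceiling_div_le_div) (auto intro: dvd_sum)
  ultimately show ?case
    by (subst lin_sat_iff_sum_over[OF fin]) auto
qed

lemma lit_val_lneg [simp]: "lit_val \<beta> (lneg l) = (\<not> lit_val \<beta> l)"
  by (cases l) auto

lemma sat_pbc_neg_iff: "sat \<beta> (pbc_neg C) \<longleftrightarrow> \<not> sat \<beta> C"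
proof -
  have "(\<Sum>(a, l) \<leftarrow> map (\<lambda>(a, l). (a, lneg l)) ts. a * of_bool (lit_val \<beta> l))
      = (\<Sum>(a, l) \<leftarrow> ts. a) - (\<Sum>(a, l) \<leftarrow> ts. a * of_bool (lit_val \<beta> l))" for ts :: "(int \<times> _) list"
    by (induction ts) auto
  then show ?thesis
    unfolding sat_def pbc_neg_def by (auto simp: of_bool_def)
qed

fun sval_val :: "('v \<Rightarrow> bool) \<Rightarrow> 'v sval \<Rightarrow> bool" where
  "sval_val \<beta> (SConst b) = b"
| "sval_val \<beta> (SLit l) = lit_val \<beta> l"

definition subst_assign :: "'v subst \<Rightarrow> ('v \<Rightarrow> bool) \<Rightarrow> 'v \<Rightarrow> bool" where
  "subst_assign \<omega> \<beta> x = sval_val \<beta> (\<omega> x)"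

lemma sval_val_subst_lit: "sval_val \<beta> (subst_lit \<omega> l) = lit_val (subst_assign \<omega> \<beta>) l"
proof (cases l)
  case (Neg x)
  then show ?thesis by (cases "\<omega> x") (auto simp: subst_assign_def)
qed (simp add: subst_assign_def)

lemma subst_assign_outside_supp: "x \<notin> supp \<omega> \<Longrightarrow> subst_assign \<omega> \<beta> x = \<beta> x"
  by (simp add: supp_def subst_assign_def)

lemma sat_restrict_iff: "sat \<beta> (restrict C \<omega>) \<longleftrightarrow> sat (subst_assign \<omega> \<beta>) C"
proof -
  have "(\<Sum>(a, l) \<leftarrow> concat (map (\<lambda>(a, l). case subst_lit \<omega> l of SLit l' \<Rightarrow> [(a, l')] | SConst _ \<Rightarrow> []) ts).
          a * of_bool (lit_val \<beta> l))
      + (\<Sum>(a, l) \<leftarrow> ts. if subst_lit \<omega> l = SConst True then a else 0)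
      = (\<Sum>(a, l) \<leftarrow> ts. a * of_bool (lit_val (subst_assign \<omega> \<beta>) l))" for ts :: "(int \<times> _) list"
  proof (induction ts)
    case (Cons t ts)
    obtain a l where t: "t = (a, l)" by (cases t)
    from Cons sval_val_subst_lit[of \<beta> \<omega> l] show ?case
      by (cases "subst_lit \<omega> l" rule: sval.exhaust[case_product bool.exhaust]) (auto simp: t)
  qed simp
  then show ?thesis
    unfolding sat_def restrict_def by (simp add: algebra_simps of_bool_def)
qed

lemma specification_prefix_step:
  assumes is_spec: "is_specification S As" and i: "i < length S"
    and sat_prefix: "\<forall>C \<in> set (take i S). sat \<beta> C"
  shows "\<exists>\<beta>'. (\<forall>C \<in> set (take (Suc i) S). sat \<beta>' C) \<and> (\<forall>x. x \<notin> As \<longrightarrow> \<beta>' x = \<beta> x)"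
proof (cases "sat \<beta> (S ! i)")
  case True
  with sat_prefix i show ?thesis
    by (auto simp: take_Suc_conv_app_nth)
next
  case False
  let ?F = "set (take i S) \<union> {pbc_neg (S ! i)}"
  from is_spec obtain \<Omega> where witnesses: "\<forall>j < length S. supp (\<Omega> j) \<subseteq> As \<and>
      cp_derives (set (take j S) \<union> {pbc_neg (S ! j)}) ((\<lambda>C. restrict C (\<Omega> j)) ` set (take (Suc j) S))"
    unfolding is_specification_def by (rule exE)
  define \<omega> where "\<omega> = \<Omega> i"
  from witnesses i have supp: "supp \<omega> \<subseteq> As"
    and derives: "cp_derives ?F ((\<lambda>C. restrict C \<omega>) ` set (take (Suc i) S))"
    unfolding \<omega>_def by simp_all
  have sat_F: "\<forall>D \<in> ?F. sat \<beta> D"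
    using sat_prefix False by (simp add: sat_pbc_neg_iff)
  have "sat (subst_assign \<omega> \<beta>) C" if "C \<in> set (take (Suc i) S)" for C
  proof -
    from derives that have "cp_derivable ?F (lin (restrict C \<omega>))"
      by (simp add: cp_derives_def)
    then have "lin_sat \<beta> (lin (restrict C \<omega>))"
      using sat_F by (rule cp_derivable_sound)
    then show ?thesis
      by (simp only: sat_iff_lin_sat[symmetric] sat_restrict_iff)
  qed
  moreover have "\<forall>x. x \<notin> As \<longrightarrow> subst_assign \<omega> \<beta> x = \<beta> x"
    using supp by (auto intro!: subst_assign_outside_supp)
  ultimately show ?thesis by blast
qed

lemma specification_extends_assignment:
  assumes "is_specification S As"
  shows "\<exists>\<beta>. (\<forall>C \<in> set S. sat \<beta> C) \<and> (\<forall>x. x \<notin> As \<longrightarrow> \<beta> x = \<alpha> x)"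
proof -
  have "\<exists>\<beta>. (\<forall>C \<in> set (take k S). sat \<beta> C) \<and> (\<forall>x. x \<notin> As \<longrightarrow> \<beta> x = \<alpha> x)"
    if "k \<le> length S" for k
    using that
  proof (induction k)
    case (Suc k)
    then obtain \<beta> where sat_prefix: "\<forall>C \<in> set (take k S). sat \<beta> C"
      and agrees: "\<forall>x. x \<notin> As \<longrightarrow> \<beta> x = \<alpha> x"
      by auto
    from Suc.prems have "k < length S" by simp
    from specification_prefix_step[OF assms this sat_prefix] agrees show ?case
      by auto
  qed auto
  from this[of "length S"] show ?thesis by simp
qed

theorem lemma1:
  fixes S :: "'v pbc list" and xs as :: "'v list" and \<alpha> :: "'v \<Rightarrow> bool"
  assumes "set xs \<inter> set as = {}"
    and "\<forall>C \<in> set S. pbc_vars C \<subseteq> set xs \<union> set as"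
    and "is_specification S (set as)"
  shows "\<exists>\<beta> :: 'v \<Rightarrow> bool. (\<forall>C \<in> set S. sat \<beta> C) \<and> (\<forall>x \<in> set xs. \<beta> x = \<alpha> x)"
  using specification_extends_assignment[OF assms(3), of \<alpha>] assms(1) by blast

end
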